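(* Let $(G_n)_{n\in\mathbb{N}}$ be an iteratively constructible family (an $F$-iteration family of $k$-graphs). Then: (1) the families $(G_{\binom{n}{2}})_{n\in\mathbb{N}}$ and $(G_{n^2})_{n\in\mathbb{N}}$ are bi-iteratively constructible (namely an $(id,F,id)$-bi-iteration family and an $(id,F^2,F)$-bi-iteration family, respectively); (2) for every $c\in\mathbb{N}^{+}$ and $d,e\in\mathbb{Z}$ there exists $r\in\mathbb{N}$ such that the family $H_n=G_{c(n+r)^2+d(n+r)+e}$, $n\in\mathbb{N}$, is bi-iteratively constructible.
   Context: A $k$-graph is $G=(V,E;R_1,\dots,R_k)$ where $(V,E)$ is a finite simple graph (its underlying graph) and $R_1,\dots,R_k$ (the labels, possibly empty) partition $V$. Basic operations on $k$-graphs: $Add_i$ adds a new isolated vertex to $R_i$; $\rho_{i\to j}$ moves all vertices of $R_i$ into $R_j$, leaving $R_i$ empty; $\eta_{i,j}$ adds all edges between $R_i$ and $R_j$; for $b\in\mathbb{N}$, $\eta^b_{i,j}$ acts as $\eta_{i,j}$ if $|R_i\cup R_j|\le b$ and otherwise does nothing; $\delta_{i,j}$ removes all edges between $R_i$ and $R_j$. An elementary operation is a finite composition of basic operations; $id$ is the empty composition. A sequence of $k$-graphs is an $F$-iteration family if $G_{n+1}=F(G_n)$ for all $n$ ($G_0$ a $k$-graph, $F$ elementary), and an $(H,F,L)$-bi-iteration family if $G_{n+1}=H(F^n(L(G_n)))$ for all $n$, $F^n$ denoting $n$-fold application. A sequence of graphs is (bi-)iteratively constructible if for some $k$ it is the sequence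 of underlying graphs of an iteration (resp. bi-iteration) family of $k$-graphs. *)

theory Defs
  imports Main
begin

text \<open>A k-graph: vertices are natural numbers; labels are 0..<k (standing for 1..k);
  lab v is the label of vertex v (only meaningful on verts); edges are 2-element sets.\<close>
record kgraph =
  verts :: "nat set"
  edges :: "nat set set"
  lab   :: "nat \<Rightarrow> nat"

definition wf_kgraph :: "nat \<Rightarrow> kgraph \<Rightarrow> bool" where
  "wf_kgraph k G \<longleftrightarrow> finite (verts G)
     \<and> edges G \<subseteq> {{u,v} | u v. u \<in> verts G \<and> v \<in> verts G \<and> u \<noteq> v}
     \<and> (\<forall>v\<in>verts G. lab G v < k)"

definition cls :: "kgraph \<Rightarrow> nat \<Rightarrow> nat set" where
  "cls G i = {v \<in> verts G. lab G v = i}"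

datatype bop = Add nat | Ren nat nat | Eta nat nat | EtaB nat nat nat | Del nat nat

definition between :: "kgraph \<Rightarrow> nat \<Rightarrow> nat \<Rightarrow> nat set set" where
  "between G i j = {{u,v} | u v. u \<in> cls G i \<and> v \<in> cls G j \<and> u \<noteq> v}"

fun apply_bop :: "bop \<Rightarrow> kgraph \<Rightarrow> kgraph" where
  "apply_bop (Add i) G =
     (let x = (LEAST x. x \<notin> verts G) in
      G\<lparr>verts := insert x (verts G), lab := (lab G)(x := i)\<rparr>)"
| "apply_bop (Ren i j) G =
     G\<lparr>lab := (\<lambda>v. if v \<in> verts G \<and> lab G v = i then j else lab G v)\<rparr>"
| "apply_bop (Eta i j) G = G\<lparr>edges := edges G \<union> between G i j\<rparr>"
| "apply_bop (EtaB b i j) G =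
     (if card (cls G i \<union> cls G j) \<le> b then G\<lparr>edges := edges G \<union> between G i j\<rparr> else G)"
| "apply_bop (Del i j) G = G\<lparr>edges := edges G - between G i j\<rparr>"

fun bop_ok :: "nat \<Rightarrow> bop \<Rightarrow> bool" where
  "bop_ok k (Add i) = (i < k)"
| "bop_ok k (Ren i j) = (i < k \<and> j < k)"
| "bop_ok k (Eta i j) = (i < k \<and> j < k)"
| "bop_ok k (EtaB b i j) = (i < k \<and> j < k)"
| "bop_ok k (Del i j) = (i < k \<and> j < k)"

text \<open>An elementary operation is a finite composition of basic operations, given as the list
  of basic operations in order of application; [] is id.\<close>
definition elementary :: "nat \<Rightarrow> bop list \<Rightarrow> bool" where
  "elementary k ops \<longleftrightarrow> (\<forall>b\<in>set ops. bop_ok k b)"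

definition apply_op :: "bop list \<Rightarrow> kgraph \<Rightarrow> kgraph" where
  "apply_op ops G = fold apply_bop ops G"

definition iteration_family :: "nat \<Rightarrow> bop list \<Rightarrow> (nat \<Rightarrow> kgraph) \<Rightarrow> bool" where
  "iteration_family k F G \<longleftrightarrow> wf_kgraph k (G 0) \<and> elementary k F
     \<and> (\<forall>n. G (Suc n) = apply_op F (G n))"

definition bi_iteration_family ::
    "nat \<Rightarrow> bop list \<Rightarrow> bop list \<Rightarrow> bop list \<Rightarrow> (nat \<Rightarrow> kgraph) \<Rightarrow> bool" where
  "bi_iteration_family k H F L G \<longleftrightarrow> wf_kgraph k (G 0)
     \<and> elementary k H \<and> elementary k F \<and> elementary k L
     \<and> (\<forall>n. G (Suc n) = apply_op H ((apply_op F ^^ n) (apply_op L (G n))))"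

type_synonym graph = "nat set \<times> nat set set"

definition underlying :: "kgraph \<Rightarrow> graph" where
  "underlying G = (verts G, edges G)"

definition graph_iso :: "graph \<Rightarrow> graph \<Rightarrow> bool" where
  "graph_iso A B \<longleftrightarrow> (\<exists>f. bij_betw f (fst A) (fst B)
     \<and> (\<forall>u\<in>fst A. \<forall>v\<in>fst A. {u,v} \<in> snd A \<longleftrightarrow> {f u, f v} \<in> snd B))"

definition bi_iteratively_constructible :: "(nat \<Rightarrow> graph) \<Rightarrow> bool" where
  "bi_iteratively_constructible S \<longleftrightarrow>
     (\<exists>k H F L G. bi_iteration_family k H F L G \<and> (\<forall>n. graph_iso (underlying (G n)) (S n)))"

end

theory Submission
  imports Defs
begin

(*
  If (G n) is an F-iteration family then G (x + y) = F^x (G y).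
  Hence, if an index sequence m satisfies the second-order recurrence
      m (n + 1) = m n + a * n + b,
  then G (m (n + 1)) = (F^a)^n (F^b (G (m n))), i.e. the sampled family (G (m n))
  is an (id, F^a, F^b)-bi-iteration family.  All parts of the theorem are instances:
    - m n = n choose 2 has a = 1, b = 0;
    - m n = n^2 has a = 2, b = 1;
    - m n = c (n + r)^2 + d (n + r) + e has a = 2c, b = 2cr + c + d, provided r is
      large enough that the polynomial is nonnegative from r on and b \<ge> 0.
  The file first shows that well-formedness of k-graphs is preserved by elementary
  operations (needed because the sampled family starts at G (m 0), not at G 0),
  then develops powers of elementary operations, the shift property of iteration
  families, the general sampling lemma, the arithmetic for quadratic indices, and
  finally derives the theorem.
*)

lemma between_subset_pairs:
  "between G i j \<subseteq> {{u,v} | u v. u \<in> verts G \<and> v \<in> verts G \<and> u \<noteq> v}"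
  unfolding between_def cls_def by blast

lemma fresh_vertex:
  assumes "finite (verts G)"
  shows "(LEAST x. x \<notin> verts G) \<notin> verts G"
proof -
  have "\<exists>x. x \<notin> verts G"
    using assms by (meson ex_new_if_finite infinite_UNIV_nat)
  then show ?thesis by (rule LeastI_ex)
qed

lemma wf_kgraph_apply_bop:
  assumes wf: "wf_kgraph k G" and ok: "bop_ok k b"
  shows "wf_kgraph k (apply_bop b G)"
proof (cases b)
  case (Add i)
  define x where "x = (LEAST x. x \<notin> verts G)"
  have "x \<notin> verts G"
    unfolding x_def using wf by (intro fresh_vertex) (simp add: wf_kgraph_def)
  have result: "apply_bop b G = G\<lparr>verts := insert x (verts G), lab := (lab G)(x := i)\<rparr>"
    using Add by (simp add: Let_def x_def)
  have "edges G \<subseteq> {{u,v} | u v. u \<in> insert x (verts G) \<and> v \<in> insert x (verts G) \<and> u \<noteq> v}"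
    using wf unfolding wf_kgraph_def by blast
  then show ?thesis
    using wf ok Add \<open>x \<notin> verts G\<close> unfolding wf_kgraph_def result by auto
qed (use wf ok between_subset_pairs[of G] in \<open>auto simp: wf_kgraph_def\<close>)

lemma wf_kgraph_apply_op:
  "wf_kgraph k G \<Longrightarrow> elementary k ops \<Longrightarrow> wf_kgraph k (apply_op ops G)"
  unfolding apply_op_def elementary_def
  by (induction ops arbitrary: G) (auto simp: wf_kgraph_apply_bop)

definition repeat_op :: "nat \<Rightarrow> bop list \<Rightarrow> bop list" where
  "repeat_op a F = concat (replicate a F)"

lemma apply_op_append: "apply_op (xs @ ys) = apply_op ys \<circ> apply_op xs"
  unfolding apply_op_def by (rule ext) simp

lemma apply_op_Nil: "apply_op [] G = G"
  by (simp add: apply_op_def)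

lemma apply_repeat_op: "apply_op (repeat_op a F) = apply_op F ^^ a"
proof (induction a)
  case 0
  then show ?case by (auto simp: repeat_op_def apply_op_def)
next
  case (Suc a)
  then show ?case
    by (simp add: repeat_op_def apply_op_append funpow_Suc_right del: funpow.simps)
qed

lemma elementary_repeat_op: "elementary k F \<Longrightarrow> elementary k (repeat_op a F)"
  unfolding elementary_def repeat_op_def by auto

lemma elementary_Nil: "elementary k []"
  by (simp add: elementary_def)

lemma iteration_family_wf:
  assumes "iteration_family k F G"
  shows "wf_kgraph k (G m)"
  using assms
  by (induction m) (auto simp: iteration_family_def intro: wf_kgraph_apply_op)

lemma iteration_family_shift:
  assumes "iteration_family k F G"
  shows "G (x + y) = (apply_op F ^^ x) (G y)"
  using assms by (induction x) (auto simp: iteration_family_def)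

lemma sampled_iteration_family_bi_iteration:
  assumes iter: "iteration_family k F G"
    and step: "\<And>n. m (Suc n) = a * n + b + m n"
  shows "bi_iteration_family k [] (repeat_op a F) (repeat_op b F) (\<lambda>n. G (m n))"
  unfolding bi_iteration_family_def
proof (intro conjI allI)
  have elF: "elementary k F" using iter by (simp add: iteration_family_def)
  then show "elementary k (repeat_op a F)" "elementary k (repeat_op b F)"
    by (simp_all add: elementary_repeat_op)
  show "elementary k []" by (rule elementary_Nil)
  show "wf_kgraph k (G (m 0))" using iter by (rule iteration_family_wf)
  fix n
  have "G (m (Suc n)) = (apply_op F ^^ (a * n + b)) (G (m n))"
    unfolding step by (rule iteration_family_shift[OF iter])
  also have "\<dots> = ((apply_op F ^^ a) ^^ n) ((apply_op F ^^ b) (G (m n)))"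
    by (simp only: funpow_add funpow_mult comp_apply mult.commute)
  finally show "G (m (Suc n)) =
      apply_op [] ((apply_op (repeat_op a F) ^^ n) (apply_op (repeat_op b F) (G (m n))))"
    by (simp only: apply_repeat_op apply_op_Nil)
qed

lemma graph_iso_refl: "graph_iso X X"
  unfolding graph_iso_def by (rule exI[of _ id]) auto

lemma bi_iteration_family_constructible:
  "bi_iteration_family k H F L G \<Longrightarrow> bi_iteratively_constructible (\<lambda>n. underlying (G n))"
  unfolding bi_iteratively_constructible_def using graph_iso_refl by blast

text \<open>The increments of n choose 2 and of n^2, written in the form required by the
  sampling lemma (slope a, offset b).\<close>
lemma choose_two_Suc: "Suc n choose 2 = 1 * n + 0 + (n choose 2)"
  by (induction n) (auto simp: numeral_2_eq_2)

lemma square_Suc: "(Suc n)^2 = 2 * n + 1 + n^2"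
  by (simp add: power2_eq_square)

lemma quadratic_nonneg:
  fixes c :: nat and d e :: int
  assumes c: "c > 0" and m: "int m \<ge> \<bar>d\<bar> + \<bar>e\<bar>"
  shows "int c * int m ^ 2 + d * int m + e \<ge> 0"
proof (cases "m = 0")
  case True
  then show ?thesis using m by simp
next
  case False
  have "\<bar>d\<bar> * int m + \<bar>e\<bar> \<le> (\<bar>d\<bar> + \<bar>e\<bar>) * int m"
    using False by (simp add: distrib_right mult_le_cancel_left1)
  also have "\<dots> \<le> int m * int m" using m by (simp add: mult_right_mono)
  also have "\<dots> \<le> int c * int m ^ 2"
    using c mult_right_mono[of 1 "int c" "int m * int m"] by (simp add: power2_eq_square)
  finally show ?thesis
    using abs_ge_minus_self[of e] abs_ge_minus_self[of d]
      mult_right_mono[of "-d" "\<bar>d\<bar>" "int m"] by linarith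
qed

lemma shifted_quadratic_index:
  fixes c :: nat and d e :: int
  assumes c: "c > 0"
  defines "r \<equiv> nat (\<bar>d\<bar> + \<bar>e\<bar>)"
  defines "p \<equiv> \<lambda>n. int c * int (n + r) ^ 2 + d * int (n + r) + e"
  shows "\<forall>n. p n \<ge> 0"
    and "nat (p (Suc n)) = 2 * c * n + nat (2 * int c * int r + int c + d) + nat (p n)"
proof -
  show nonneg: "\<forall>n. p n \<ge> 0"
  proof
    fix n
    show "p n \<ge> 0" unfolding p_def by (rule quadratic_nonneg[OF c]) (simp add: r_def)
  qed
  have "int r \<ge> \<bar>d\<bar>" by (simp add: r_def)
  moreover have "int c * int r \<ge> int r"
    using c mult_right_mono[of 1 "int c" "int r"] by simp
  ultimately have "2 * int c * int r + int c + d \<ge> 0" by linarith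
  moreover have "p (Suc n) = 2 * int c * int n + (2 * int c * int r + int c + d) + p n"
    unfolding p_def by (simp add: power2_eq_square algebra_simps)
  ultimately show "nat (p (Suc n)) = 2 * c * n + nat (2 * int c * int r + int c + d) + nat (p n)"
    using nonneg by (simp add: nat_add_distrib nat_mult_distrib)
qed

theorem mainTheorem13:
  fixes k :: nat and F :: "bop list" and G :: "nat \<Rightarrow> kgraph"
  assumes "iteration_family k F G"
  shows "bi_iteration_family k [] F [] (\<lambda>n. G (n choose 2))
    \<and> bi_iteration_family k [] (F @ F) F (\<lambda>n. G (n ^ 2))
    \<and> (\<forall>c::nat. c > 0 \<longrightarrow> (\<forall>d e :: int. \<exists>r::nat.
          (\<forall>n::nat. int c * int (n + r) ^ 2 + d * int (n + r) + e \<ge> 0)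
        \<and> bi_iteratively_constructible
            (\<lambda>n. underlying (G (nat (int c * int (n + r) ^ 2 + d * int (n + r) + e))))))"
proof (intro conjI allI impI)
  show "bi_iteration_family k [] F [] (\<lambda>n. G (n choose 2))"
    using sampled_iteration_family_bi_iteration[OF assms choose_two_Suc]
    by (simp add: repeat_op_def)
  show "bi_iteration_family k [] (F @ F) F (\<lambda>n. G (n ^ 2))"
    using sampled_iteration_family_bi_iteration[OF assms square_Suc]
    by (simp add: repeat_op_def numeral_2_eq_2)
  fix c :: nat and d e :: int
  assume "c > 0"
  let ?r = "nat (\<bar>d\<bar> + \<bar>e\<bar>)"
  let ?p = "\<lambda>n. int c * int (n + ?r) ^ 2 + d * int (n + ?r) + e"
  note index = shifted_quadratic_index[OF \<open>c > 0\<close>, where d = d and e = e]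
  have "bi_iteration_family k [] (repeat_op (2 * c) F)
      (repeat_op (nat (2 * int c * int ?r + int c + d)) F) (\<lambda>n. G (nat (?p n)))"
    using sampled_iteration_family_bi_iteration[OF assms index(2)] .
  then show "\<exists>r::nat. (\<forall>n::nat. int c * int (n + r) ^ 2 + d * int (n + r) + e \<ge> 0)
        \<and> bi_iteratively_constructible
            (\<lambda>n. underlying (G (nat (int c * int (n + r) ^ 2 + d * int (n + r) + e))))"
    using index(1) bi_iteration_family_constructible by blast
qed

end
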